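(* Let $M=B\circ S$ with $S$ Poisson subsampling of rate $r$ and $B$ the Gaussian mechanism $B(y)=h(y)+V$, $h:\mathbb Y\to\mathbb R^D$, $V\sim\mathcal N(0,\sigma^2 I_D)$, $\sigma>0$. Let $L_2=\max_{y\simeq_\pm y'}\|h(y)-h(y')\|_2>0$. Then for all $x\simeq_{K_+,K_-}x'$, $$\Psi_\alpha(m_x\|m_{x'})\le\Psi_\alpha\Big(\sum_{i=1}^{K_-+1}f^{(1)}_i\,\mathrm{Binom}(i-1\mid K_-,r)\ \Big\|\ \sum_{j=1}^{K_++1}f^{(2)}_j\,\mathrm{Binom}(j-1\mid K_+,r)\Big),$$ where $f^{(1)}_i$ is the univariate normal density with mean $i-1$ and standard deviation $\sigma/L_2$, and $f^{(2)}_j$ is the univariate normal density with mean $-(j-1)$ and standard deviation $\sigma/L_2$.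
   Context: Finite set $\mathbb A$, datasets $x\subseteq\mathbb A$, batches are subsets $y\subseteq x$. Poisson subsampling with rate $r$: $s_x(y)=r^{|y|}(1-r)^{|x|-|y|}$ for $y\subseteq x$; $m_x(z)=\sum_y b_y(z)s_x(y)$ where $b_y$ is the density of $B(y)$. $y\simeq_\pm y'$ iff one is obtained from the other by inserting or removing a single element. $x\simeq_{K_+,K_-}x'$ iff $x'=(x\setminus g_-)\cup g_+$ with $g_-\subseteq x$, $|g_-|=K_-$, $g_+\cap x=\emptyset$, $|g_+|=K_+$. $\mathrm{Binom}(k\mid n,r)=\binom nk r^k(1-r)^{n-k}$. $H_\alpha(p\|q)=\int\max\{p-\alpha q,0\}$ ($\alpha\ge0$), $\Lambda_\alpha(p\|q)=\int p^\alpha q^{1-\alpha}$ ($\alpha>1$); $\Psi_\alpha$ is either. *)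

theory Defs
  imports "HOL-Probability.Probability"
begin

definition poisson_sub :: "real \<Rightarrow> 'a set \<Rightarrow> 'a set \<Rightarrow> real" where
  "poisson_sub r x y = (if y \<subseteq> x then r ^ card y * (1 - r) ^ (card x - card y) else 0)"

definition gauss_mech_density :: "real \<Rightarrow> ('b set \<Rightarrow> real ^ 'd) \<Rightarrow> 'b set \<Rightarrow> real ^ 'd \<Rightarrow> real" where
  "gauss_mech_density \<sigma> h y z = (\<Prod>i\<in>UNIV. normal_density (h y $ i) \<sigma> (z $ i))"

definition subsampled_density ::
  "real \<Rightarrow> real \<Rightarrow> ('b set \<Rightarrow> real ^ 'd) \<Rightarrow> 'b set \<Rightarrow> real ^ 'd \<Rightarrow> real" where
  "subsampled_density r \<sigma> h x z = (\<Sum>y\<in>Pow x. gauss_mech_density \<sigma> h y z * poisson_sub r x y)"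

definition neighbor_pm :: "'a set \<Rightarrow> 'a set \<Rightarrow> bool" where
  "neighbor_pm y y' \<longleftrightarrow> (\<exists>a. a \<notin> y \<and> y' = insert a y) \<or> (\<exists>a. a \<notin> y' \<and> y = insert a y')"

definition group_neighbor :: "nat \<Rightarrow> nat \<Rightarrow> 'a set \<Rightarrow> 'a set \<Rightarrow> bool" where
  "group_neighbor Kp Km x x' \<longleftrightarrow>
     (\<exists>gm gp. gm \<subseteq> x \<and> card gm = Km \<and> gp \<inter> x = {} \<and> card gp = Kp \<and> x' = (x - gm) \<union> gp)"

definition l2_sens :: "('a::finite set \<Rightarrow> real ^ 'd) \<Rightarrow> real" where
  "l2_sens h = Max {norm (h y - h y') | y y'. neighbor_pm y y'}"

definition Binom :: "nat \<Rightarrow> nat \<Rightarrow> real \<Rightarrow> real" where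
  "Binom k n r = real (n choose k) * r ^ k * (1 - r) ^ (n - k)"

definition hockey_stick :: "'c measure \<Rightarrow> real \<Rightarrow> ('c \<Rightarrow> real) \<Rightarrow> ('c \<Rightarrow> real) \<Rightarrow> ennreal" where
  "hockey_stick M \<alpha> p q = (\<integral>\<^sup>+ z. ennreal (max (p z - \<alpha> * q z) 0) \<partial>M)"

definition renyi_moment :: "'c measure \<Rightarrow> real \<Rightarrow> ('c \<Rightarrow> real) \<Rightarrow> ('c \<Rightarrow> real) \<Rightarrow> ennreal" where
  "renyi_moment M \<alpha> p q = (\<integral>\<^sup>+ z. ennreal (p z powr \<alpha> * q z powr (1 - \<alpha>)) \<partial>M)"

end

theory Submission
  imports Defs
begin

text \<open>
  Write \<open>x = c \<union> g\<^sub>-\<close> and \<open>x' = c \<union> g\<^sub>+\<close>. Conditioned on the part \<open>u \<subseteq> c\<close> of the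
  batch, \<open>m\<^sub>x\<close> and \<open>m\<^sub>x\<^sub>'\<close> are Poisson mixtures, over \<open>v \<subseteq> g\<^sub>-\<close> resp. \<open>v \<subseteq> g\<^sub>+\<close>, of
  isotropic Gaussians centred at \<open>h (u \<union> v)\<close>, and \<open>\<parallel>h (u \<union> v) - h u\<parallel> \<le> |v| L\<^sub>2\<close>.
  Let \<open>S = {\<alpha> q < p}\<close> be the set on which the hockey-stick divergence of \<open>m\<^sub>x\<close> and
  \<open>m\<^sub>x\<^sub>'\<close> is attained. If the Gaussian centred at \<open>h u\<close> gives \<open>S\<close> the standard normal
  tail mass \<open>\<Phi>(t, \<infinity>)\<close>, the Neyman-Pearson lemma for two Gaussians, whose optimal sets are
  half-spaces, shows that the one centred at \<open>h (u \<union> v)\<close> gives \<open>S\<close> a mass between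
  \<open>\<Phi>(t + |v|/s, \<infinity>)\<close> and \<open>\<Phi>(t - |v|/s, \<infinity>)\<close>, where \<open>s = \<sigma>/L\<^sub>2\<close>. These are the masses
  that the components of \<open>Q\<close> and \<open>P\<close> give to the half-line \<open>(t s, \<infinity>)\<close>, so every
  conditional contribution is at most \<open>H\<^sub>\<alpha>(P \<parallel> Q)\<close>. Finally \<open>\<Lambda>\<^sub>\<alpha>\<close> is a mixture of
  hockey-stick divergences,
  \<open>\<Lambda>\<^sub>\<alpha>(p \<parallel> q) = \<integral>\<^sub>0\<^sup>\<infinity> \<alpha> (\<alpha> - 1) \<gamma>\<^sup>\<alpha>\<^sup>-\<^sup>2 H\<^sub>\<gamma>(p \<parallel> q) d\<gamma>\<close>, so the bound transfers.
\<close>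

section \<open>The standard normal tail\<close>

abbreviation std_normal :: "real measure" where
  "std_normal \<equiv> density lborel std_normal_density"

definition normal_tail :: "real \<Rightarrow> real" where
  "normal_tail c = measure std_normal {c<..}"

lemma real_distribution_std_normal: "real_distribution std_normal"
proof -
  interpret prob_space std_normal
    using prob_space_normal_density by simp
  show ?thesis by standard auto
qed

lemma measure_std_normal_singleton: "measure std_normal {c} = 0"
proof -
  have "AE t in lborel. t \<in> {c} \<longrightarrow> std_normal_density t = 0"
    using AE_lborel_singleton[of c] by eventually_elim auto
  then have "{c} \<in> null_sets std_normal"
    by (subst null_sets_density_iff) auto
  then have "emeasure std_normal {c} = 0"
    by (rule null_setsD1)
  then show ?thesis by (simp add: measure_def)
qed

lemma normal_tail_eq_1_minus_cdf: "normal_tail c = 1 - cdf std_normal c"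
proof -
  interpret real_distribution std_normal by (rule real_distribution_std_normal)
  have "normal_tail c = prob (UNIV - {..c})"
    unfolding normal_tail_def by (intro arg_cong[where f=prob]) auto
  also have "\<dots> = 1 - prob {..c}"
    using prob_compl[of "{..c}"] by simp
  finally show ?thesis by (simp add: cdf_def2)
qed

lemma normal_tail_antimono: "x \<le> y \<Longrightarrow> normal_tail y \<le> normal_tail x"
proof -
  interpret real_distribution std_normal by (rule real_distribution_std_normal)
  assume "x \<le> y"
  then show ?thesis
    unfolding normal_tail_eq_1_minus_cdf using cdf_nondecreasing[of x y] by simp
qed

lemma normal_tail_surj:
  assumes "0 < \<beta>" "\<beta> < 1"
  obtains c where "normal_tail c = \<beta>"
proof -
  interpret real_distribution std_normal by (rule real_distribution_std_normal)
  have "eventually (\<lambda>x. cdf std_normal x < 1 - \<beta>) at_bot"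
    using cdf_lim_at_bot assms by (intro order_tendstoD(2)) auto
  then obtain a where a: "cdf std_normal a < 1 - \<beta>"
    by (auto simp: eventually_at_bot_linorder)
  have "eventually (\<lambda>x. cdf std_normal x > 1 - \<beta>) at_top"
    using cdf_lim_at_top_prob assms by (intro order_tendstoD(1)) auto
  then obtain b where b: "cdf std_normal b > 1 - \<beta>" "a \<le> b"
    by (metis eventually_at_top_linorder nle_le)
  have "isCont (cdf std_normal) x" for x
    by (simp add: isCont_cdf measure_std_normal_singleton)
  then obtain x where "cdf std_normal x = 1 - \<beta>"
    using IVT[of "cdf std_normal" a "1 - \<beta>" b] a b by auto
  then show ?thesis
    using that[of x] by (simp add: normal_tail_eq_1_minus_cdf)
qed

lemma measure_normal_density_greaterThan:
  assumes "\<sigma> > 0"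
  shows "measure (density lborel (normal_density \<mu> \<sigma>)) {t<..} = normal_tail ((t - \<mu>) / \<sigma>)"
proof -
  let ?M = "density lborel (normal_density \<mu> \<sigma>)"
  interpret prob_space ?M
    using prob_space_normal_density assms by blast
  have "distributed ?M lborel (\<lambda>x. x) (normal_density \<mu> \<sigma>)"
    by (auto simp: distributed_def intro!: density_cong simp: distr_id2 cong: distr_cong)
  then have std: "distributed ?M lborel (\<lambda>x. (x - \<mu>) / \<sigma>) std_normal_density"
    using normal_standard_normal_convert[OF assms, of "\<lambda>x. x" \<mu>] by simp
  have "measure ?M {t<..} = measure ?M ((\<lambda>x. (x - \<mu>) / \<sigma>) -` {(t - \<mu>) / \<sigma><..} \<inter> space ?M)"
    using assms by (intro arg_cong2[where f=measure]) (auto simp: divide_less_cancel)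
  also have "\<dots> = measure (distr ?M lborel (\<lambda>x. (x - \<mu>) / \<sigma>)) {(t - \<mu>) / \<sigma><..}"
    by (subst measure_distr) auto
  also have "distr ?M lborel (\<lambda>x. (x - \<mu>) / \<sigma>) = std_normal"
    using std by (simp add: distributed_def)
  finally show ?thesis unfolding normal_tail_def .
qed

lemma normal_tail_minus: "normal_tail (- c) = 1 - normal_tail c"
proof -
  interpret real_distribution std_normal by (rule real_distribution_std_normal)
  have "distributed std_normal lborel (\<lambda>x. x) std_normal_density"
    by (auto simp: distributed_def intro!: density_cong simp: distr_id2 cong: distr_cong)
  from normal_density_affine[OF this, of "-1" 0]
  have reflect: "distr std_normal lborel uminus = std_normal"
    by (simp add: distributed_def)
  have "normal_tail (- c) = measure (distr std_normal lborel uminus) {- c<..}"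
    by (simp add: reflect normal_tail_def)
  also have "\<dots> = prob {..<c}"
    by (subst measure_distr) (auto intro!: arg_cong[where f=prob])
  also have "{..<c} = UNIV - ({c} \<union> {c<..})"
    by auto
  also have "prob \<dots> = 1 - prob ({c} \<union> {c<..})"
    using prob_compl[of "{c} \<union> {c<..}"] by simp
  also have "prob ({c} \<union> {c<..}) = normal_tail c"
    by (subst finite_measure_Union) (auto simp: measure_std_normal_singleton normal_tail_def)
  finally show ?thesis .
qed

section \<open>Isotropic Gaussians on \<open>\<real>\<^sup>d\<close>\<close>

definition iso_normal_density :: "real ^ 'd \<Rightarrow> real \<Rightarrow> real ^ 'd \<Rightarrow> real" where
  "iso_normal_density \<mu> \<sigma> z = (\<Prod>i\<in>UNIV. normal_density (\<mu> $ i) \<sigma> (z $ i))"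

definition iso_normal :: "real ^ 'd \<Rightarrow> real \<Rightarrow> (real ^ 'd) measure" where
  "iso_normal \<mu> \<sigma> = density lborel (iso_normal_density \<mu> \<sigma>)"

lemma sets_iso_normal [simp, measurable_cong]: "sets (iso_normal \<mu> \<sigma>) = sets borel"
  and space_iso_normal [simp]: "space (iso_normal \<mu> \<sigma>) = UNIV"
  by (simp_all add: iso_normal_def)

lemma gauss_mech_density_eq: "gauss_mech_density \<sigma> h y = iso_normal_density (h y) \<sigma>"
  by (simp add: fun_eq_iff gauss_mech_density_def iso_normal_density_def)

lemma iso_normal_density_Basis:
  "iso_normal_density \<mu> \<sigma> z = (\<Prod>b\<in>Basis. normal_density (\<mu> \<bullet> b) \<sigma> (z \<bullet> b))"
proof -
  have inj: "inj (\<lambda>i::'d::finite. axis i (1::real))"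
    by (auto simp: inj_def axis_eq_axis)
  have basis: "(Basis :: (real ^ 'd) set) = (\<lambda>i. axis i 1) ` UNIV"
    by (auto simp: Basis_vec_def)
  show ?thesis
    unfolding iso_normal_density_def basis by (subst prod.reindex[OF inj]) (simp add: inner_axis)
qed

lemma borel_measurable_iso_normal_density [measurable]:
  "iso_normal_density \<mu> \<sigma> \<in> borel_measurable borel"
  unfolding iso_normal_density_Basis[abs_def] by measurable

lemma iso_normal_density_nonneg: "0 \<le> iso_normal_density \<mu> \<sigma> z"
  unfolding iso_normal_density_def by (intro prod_nonneg) auto

lemma iso_normal_density_pos: "\<sigma> > 0 \<Longrightarrow> 0 < iso_normal_density \<mu> \<sigma> z"
  unfolding iso_normal_density_def by (intro prod_pos) (auto intro: normal_density_pos)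

lemma density_PiM_lborel_prod:
  fixes g :: "'i \<Rightarrow> real \<Rightarrow> real"
  assumes "finite I" and [measurable]: "\<And>i. g i \<in> borel_measurable borel"
    and nonneg: "\<And>i x. 0 \<le> g i x" and prob: "\<And>i. prob_space (density lborel (g i))"
  shows "density (PiM I (\<lambda>_. lborel)) (\<lambda>f. \<Prod>i\<in>I. g i (f i)) = PiM I (\<lambda>i. density lborel (g i))"
proof -
  interpret L: product_sigma_finite "\<lambda>_::'i. lborel :: real measure"
    by standard
  interpret D: product_sigma_finite "\<lambda>i. density lborel (g i)"
    unfolding product_sigma_finite_def using prob prob_space_imp_sigma_finite by blast
  show ?thesis
  proof (rule D.PiM_eqI[OF \<open>finite I\<close>])
    fix A assume "\<And>i. i \<in> I \<Longrightarrow> A i \<in> sets (density lborel (g i))"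
    then have [measurable]: "\<And>i. i \<in> I \<Longrightarrow> A i \<in> sets borel"
      by auto
    have "emeasure (density (PiM I (\<lambda>_. lborel)) (\<lambda>f. \<Prod>i\<in>I. g i (f i))) (PiE I A)
        = (\<integral>\<^sup>+ f. ennreal (\<Prod>i\<in>I. g i (f i)) * indicator (PiE I A) f \<partial>PiM I (\<lambda>_. lborel))"
      by (rule emeasure_density) (auto intro!: sets_PiM_I_finite \<open>finite I\<close>)
    also have "\<dots> = (\<integral>\<^sup>+ f. (\<Prod>i\<in>I. ennreal (g i (f i)) * indicator (A i) (f i)) \<partial>PiM I (\<lambda>_. lborel))"
    proof (intro nn_integral_cong)
      fix f :: "'i \<Rightarrow> real" assume "f \<in> space (PiM I (\<lambda>_. lborel))"
      then have "indicator (PiE I A) f = (\<Prod>i\<in>I. indicator (A i) (f i) :: ennreal)"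
        using \<open>finite I\<close> by (auto simp: indicator_def PiE_iff prod_zero_iff space_PiM)
      then show "ennreal (\<Prod>i\<in>I. g i (f i)) * indicator (PiE I A) f
           = (\<Prod>i\<in>I. ennreal (g i (f i)) * indicator (A i) (f i))"
        by (simp add: prod.distrib prod_ennreal nonneg)
    qed
    also have "\<dots> = (\<Prod>i\<in>I. \<integral>\<^sup>+ x. ennreal (g i x) * indicator (A i) x \<partial>lborel)"
      by (intro L.product_nn_integral_prod \<open>finite I\<close>) auto
    also have "\<dots> = (\<Prod>i\<in>I. emeasure (density lborel (g i)) (A i))"
      by (intro prod.cong refl) (simp add: emeasure_density)
    finally show "emeasure (density (PiM I (\<lambda>_. lborel)) (\<lambda>f. \<Prod>i\<in>I. g i (f i))) (PiE I A)
        = (\<Prod>i\<in>I. emeasure (density lborel (g i)) (A i))" .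
  qed (auto intro!: sets_PiM_cong)
qed

lemma iso_normal_eq_distr_PiM:
  assumes "\<sigma> > 0"
  shows "iso_normal \<mu> \<sigma> = distr (PiM Basis (\<lambda>b. density lborel (normal_density (\<mu> \<bullet> b) \<sigma>))) borel
                              (\<lambda>f. \<Sum>b\<in>Basis. f b *\<^sub>R b)"
proof -
  let ?F = "\<lambda>f :: real ^ 'd \<Rightarrow> real. \<Sum>b\<in>Basis. f b *\<^sub>R b"
  have coord: "?F f \<bullet> b = f b" if "b \<in> Basis" for f b
    using that by (simp add: inner_sum_left inner_Basis if_distrib cong: if_cong)
  have "iso_normal \<mu> \<sigma> = density (distr (PiM Basis (\<lambda>_. lborel)) borel ?F) (iso_normal_density \<mu> \<sigma>)"
    unfolding iso_normal_def by (subst lborel_eq) simp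
  also have "\<dots> = distr (density (PiM Basis (\<lambda>_. lborel)) (\<lambda>f. iso_normal_density \<mu> \<sigma> (?F f))) borel ?F"
    by (rule density_distr) auto
  also have "density (PiM Basis (\<lambda>_. lborel)) (\<lambda>f. iso_normal_density \<mu> \<sigma> (?F f))
      = density (PiM Basis (\<lambda>_. lborel)) (\<lambda>f. \<Prod>b\<in>Basis. normal_density (\<mu> \<bullet> b) \<sigma> (f b))"
    by (intro density_cong) (auto simp: iso_normal_density_Basis coord intro!: prod.cong)
  also have "\<dots> = PiM Basis (\<lambda>b. density lborel (normal_density (\<mu> \<bullet> b) \<sigma>))"
    by (rule density_PiM_lborel_prod) (auto intro: prob_space_normal_density assms)
  finally show ?thesis .
qed

lemma prob_space_iso_normal:
  assumes "\<sigma> > 0"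
  shows "prob_space (iso_normal \<mu> \<sigma>)"
  unfolding iso_normal_eq_distr_PiM[OF assms]
  by (intro prob_space.prob_space_distr prob_space_PiM prob_space_normal_density assms) measurable

lemma null_sets_iso_normal:
  assumes "\<sigma> > 0"
  shows "null_sets (iso_normal \<mu> \<sigma>) = null_sets lborel"
proof -
  have "A \<in> null_sets (iso_normal \<mu> \<sigma>) \<longleftrightarrow> A \<in> null_sets lborel" for A
  proof -
    have "(AE z in lborel. z \<in> A \<longrightarrow> ennreal (iso_normal_density \<mu> \<sigma> z) = 0) \<longleftrightarrow> (AE z in lborel. z \<notin> A)"
      using iso_normal_density_pos[OF assms, of \<mu>] by (intro AE_cong) (simp add: less_imp_neq[symmetric])
    then show ?thesis
      unfolding iso_normal_def by (subst null_sets_density_iff) (auto simp: AE_iff_null_sets intro: AE_not_in)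
  qed
  then show ?thesis by blast
qed

lemma indep_vars_PiM_components:
  assumes "finite I" "I \<noteq> {}" "\<And>i. i \<in> I \<Longrightarrow> prob_space (M i)"
  shows "prob_space.indep_vars (PiM I M) M (\<lambda>i f. f i) I"
proof -
  interpret prob_space "PiM I M"
    by (rule prob_space_PiM) fact
  have "distr (PiM I M) (PiM I M) (\<lambda>f. restrict f I) = distr (PiM I M) (PiM I M) (\<lambda>f. f)"
    by (rule distr_cong) (auto simp: space_PiM PiE_restrict)
  also have "\<dots> = PiM I (\<lambda>i. distr (PiM I M) (M i) (\<lambda>f. f i))"
    using assms by (auto intro!: PiM_cong simp: distr_PiM_component)
  finally show ?thesis
    using assms by (subst indep_vars_iff_distr_eq_PiM') auto
qed

lemma distributed_PiM_normal_inner: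
  fixes \<mu> e :: "real ^ 'd"
  assumes "\<sigma> > 0" "norm e = 1"
  defines "\<Omega> \<equiv> PiM Basis (\<lambda>b. density lborel (normal_density (\<mu> \<bullet> b) \<sigma>))"
  shows "distributed \<Omega> lborel (\<lambda>f. \<Sum>b\<in>Basis. (e \<bullet> b) * f b) (normal_density (\<mu> \<bullet> e) \<sigma>)"
proof -
  interpret prob_space \<Omega>
    unfolding \<Omega>_def by (intro prob_space_PiM prob_space_normal_density assms)
  \<comment> \<open>\<open>sum_indep_normal\<close> needs positive variances, so coordinates orthogonal to \<open>e\<close> are dropped.\<close>
  define B where "B = {b \<in> (Basis :: (real ^ 'd) set). e \<bullet> b \<noteq> 0}"
  have sum_B: "(\<Sum>b\<in>Basis. f b) = (\<Sum>b\<in>B. f b)" if "\<And>b. e \<bullet> b = 0 \<Longrightarrow> f b = 0" for f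
    using that by (intro sum.mono_neutral_right) (auto simp: B_def)
  have "(\<Sum>b\<in>B. (e \<bullet> b)\<^sup>2) = 1"
    using assms(2) euclidean_inner[of e e] sum_B[of "\<lambda>b. (e \<bullet> b)\<^sup>2"]
    by (simp add: power2_eq_square flip: power2_norm_eq_inner)
  then have "B \<noteq> {}" and var: "(\<Sum>b\<in>B. (\<bar>e \<bullet> b\<bar> * \<sigma>)\<^sup>2) = \<sigma>\<^sup>2"
    by (auto simp: power_mult_distrib simp flip: sum_distrib_right)
  have mean: "(\<Sum>b\<in>B. (e \<bullet> b) * (\<mu> \<bullet> b)) = \<mu> \<bullet> e"
    using euclidean_inner[of \<mu> e] sum_B[of "\<lambda>b. (\<mu> \<bullet> b) * (e \<bullet> b)"] by (simp add: mult.commute)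
  have "distributed \<Omega> lborel (\<lambda>f. f b) (normal_density (\<mu> \<bullet> b) \<sigma>)" if "b \<in> Basis" for b
  proof -
    have "distr \<Omega> lborel (\<lambda>f. f b) = distr \<Omega> (density lborel (normal_density (\<mu> \<bullet> b) \<sigma>)) (\<lambda>f. f b)"
      by (rule distr_cong) auto
    also have "\<dots> = density lborel (normal_density (\<mu> \<bullet> b) \<sigma>)"
      unfolding \<Omega>_def by (rule distr_PiM_component) (auto intro: prob_space_normal_density assms(1) that)
    finally show ?thesis
      using that by (auto simp: distributed_def \<Omega>_def)
  qed
  then have "distributed \<Omega> lborel (\<lambda>f. (e \<bullet> b) * f b) (normal_density ((e \<bullet> b) * (\<mu> \<bullet> b)) (\<bar>e \<bullet> b\<bar> * \<sigma>))"
    if "b \<in> B" for b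
    using normal_density_affine[of "\<lambda>f. f b" "\<mu> \<bullet> b" \<sigma> "e \<bullet> b" 0] that assms(1) by (auto simp: B_def)
  moreover have "indep_vars (\<lambda>b. density lborel (normal_density (\<mu> \<bullet> b) \<sigma>)) (\<lambda>b f. f b) Basis"
    unfolding \<Omega>_def by (rule indep_vars_PiM_components) (auto intro: prob_space_normal_density assms(1))
  then have "indep_vars (\<lambda>_. borel) (\<lambda>b f. (e \<bullet> b) * f b) B"
    by (rule indep_vars_compose2[OF indep_vars_subset]) (auto simp: B_def)
  ultimately have "distributed \<Omega> lborel (\<lambda>f. \<Sum>b\<in>B. (e \<bullet> b) * f b)
      (normal_density (\<Sum>b\<in>B. (e \<bullet> b) * (\<mu> \<bullet> b)) (sqrt (\<Sum>b\<in>B. (\<bar>e \<bullet> b\<bar> * \<sigma>)\<^sup>2)))"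
    by (intro sum_indep_normal) (use \<open>B \<noteq> {}\<close> assms(1) in \<open>auto simp: B_def\<close>)
  then have "distributed \<Omega> lborel (\<lambda>f. \<Sum>b\<in>B. (e \<bullet> b) * f b) (normal_density (\<mu> \<bullet> e) \<sigma>)"
    using var mean assms(1) by simp
  then show ?thesis
    by (subst sum_B) auto
qed

lemma measure_iso_normal_halfspace:
  fixes \<mu> e :: "real ^ 'd"
  assumes "\<sigma> > 0" "norm e = 1"
  shows "measure (iso_normal \<mu> \<sigma>) {z. z \<bullet> e > t} = normal_tail ((t - \<mu> \<bullet> e) / \<sigma>)"
proof -
  define \<Omega> where "\<Omega> = PiM Basis (\<lambda>b. density lborel (normal_density (\<mu> \<bullet> b) \<sigma>))"
  define Y where "Y = (\<lambda>f :: real ^ 'd \<Rightarrow> real. \<Sum>b\<in>Basis. (e \<bullet> b) * f b)"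
  have Y: "distributed \<Omega> lborel Y (normal_density (\<mu> \<bullet> e) \<sigma>)"
    unfolding Y_def \<Omega>_def by (rule distributed_PiM_normal_inner[OF assms])
  have sets_\<Omega>: "sets \<Omega> = sets (PiM Basis (\<lambda>_. borel :: real measure))"
    unfolding \<Omega>_def by (intro sets_PiM_cong) auto
  have "(\<Sum>b\<in>Basis. f b *\<^sub>R b) \<bullet> e = Y f" for f
    by (simp add: Y_def inner_commute[of _ e] inner_sum_right mult.commute[of "f _"])
  then have "measure (iso_normal \<mu> \<sigma>) {z. z \<bullet> e > t} = measure \<Omega> (Y -` {t<..} \<inter> space \<Omega>)"
    unfolding iso_normal_eq_distr_PiM[OF assms(1)] \<Omega>_def[symmetric]
    by (subst measure_distr) (auto simp: measurable_cong_sets[OF sets_\<Omega> refl] vimage_def)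
  also have "\<dots> = measure (distr \<Omega> lborel Y) {t<..}"
    using Y by (subst measure_distr) (auto simp: distributed_def)
  also have "\<dots> = normal_tail ((t - \<mu> \<bullet> e) / \<sigma>)"
    using Y assms by (simp add: distributed_def measure_normal_density_greaterThan)
  finally show ?thesis .
qed

lemma measure_iso_normal_eq_0_iff:
  assumes "\<sigma> > 0" "S \<in> sets borel"
  shows "measure (iso_normal \<mu> \<sigma>) S = 0 \<longleftrightarrow> S \<in> null_sets lborel"
proof -
  interpret prob_space "iso_normal \<mu> \<sigma>"
    by (rule prob_space_iso_normal) fact
  have "measure (iso_normal \<mu> \<sigma>) S = 0 \<longleftrightarrow> S \<in> null_sets (iso_normal \<mu> \<sigma>)"
    using assms(2) by (auto simp: emeasure_eq_measure)
  then show ?thesis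
    by (simp add: null_sets_iso_normal[OF assms(1)])
qed

lemma measure_iso_normal_eq_1_iff:
  assumes "\<sigma> > 0" "S \<in> sets borel"
  shows "measure (iso_normal \<mu> \<sigma>) S = 1 \<longleftrightarrow> UNIV - S \<in> null_sets lborel"
proof -
  interpret prob_space "iso_normal \<mu> \<sigma>"
    by (rule prob_space_iso_normal) fact
  show ?thesis
    using prob_compl[of S] measure_iso_normal_eq_0_iff[OF assms(1), of "UNIV - S" \<mu>] assms by auto
qed

section \<open>The Neyman-Pearson bound for shifted Gaussians\<close>

lemma integrable_density_lborel:
  fixes g :: "'a::euclidean_space \<Rightarrow> real"
  assumes [measurable]: "g \<in> borel_measurable borel"
    and "\<And>z. 0 \<le> g z" "prob_space (density lborel g)"
  shows "integrable lborel g"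
proof (rule integrableI_nonneg)
  interpret prob_space "density lborel g" by fact
  have "(\<integral>\<^sup>+ z. ennreal (g z) \<partial>lborel) = emeasure (density lborel g) UNIV"
    by (simp add: emeasure_density)
  then show "(\<integral>\<^sup>+ z. ennreal (g z) \<partial>lborel) < \<infinity>"
    using emeasure_space_1 by simp
qed (use assms in auto)

lemma integral_indicator_density_lborel:
  fixes g :: "'a::euclidean_space \<Rightarrow> real"
  assumes [measurable]: "g \<in> borel_measurable borel" "A \<in> sets borel"
    and nonneg: "\<And>z. 0 \<le> g z" and prob: "prob_space (density lborel g)"
  shows "(\<integral> z. g z * indicator A z \<partial>lborel) = measure (density lborel g) A"
proof -
  interpret prob_space "density lborel g" by (rule prob)
  have "integrable lborel (\<lambda>z. g z * indicator A z)"
    by (intro integrable_real_mult_indicator integrable_density_lborel nonneg prob) auto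
  then have "ennreal (\<integral> z. g z * indicator A z \<partial>lborel) = (\<integral>\<^sup>+ z. ennreal (g z * indicator A z) \<partial>lborel)"
    by (rule nn_integral_eq_integral[symmetric]) (auto simp: nonneg)
  also have "\<dots> = emeasure (density lborel g) A"
    by (subst emeasure_density) (auto intro!: nn_integral_cong simp: indicator_def)
  also have "\<dots> = ennreal (measure (density lborel g) A)"
    by (simp add: emeasure_eq_measure)
  finally show ?thesis
    by (subst (asm) ennreal_inj) (auto intro!: integral_nonneg_AE simp: nonneg)
qed

lemma neyman_pearson_density_lborel:
  fixes g0 g1 :: "'a::euclidean_space \<Rightarrow> real"
  assumes [measurable]: "g0 \<in> borel_measurable borel" "g1 \<in> borel_measurable borel"
    "S \<in> sets borel" "T \<in> sets borel"
    and nonneg: "\<And>z. 0 \<le> g0 z" "\<And>z. 0 \<le> g1 z"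
    and prob: "prob_space (density lborel g0)" "prob_space (density lborel g1)"
    and "k \<ge> 0" and "\<And>z. z \<in> T \<Longrightarrow> k * g0 z \<le> g1 z" "\<And>z. z \<notin> T \<Longrightarrow> g1 z \<le> k * g0 z"
    and "measure (density lborel g0) S \<le> measure (density lborel g0) T"
  shows "measure (density lborel g1) S \<le> measure (density lborel g1) T"
proof -
  have int: "integrable lborel (\<lambda>z. g0 z * indicator S z)" "integrable lborel (\<lambda>z. g0 z * indicator T z)"
    "integrable lborel (\<lambda>z. g1 z * indicator S z)" "integrable lborel (\<lambda>z. g1 z * indicator T z)"
    by (auto intro!: integrable_real_mult_indicator integrable_density_lborel nonneg prob)
  have "measure (density lborel g1) S - measure (density lborel g1) T
      = (\<integral> z. g1 z * indicator S z - g1 z * indicator T z \<partial>lborel)"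
    by (simp add: Bochner_Integration.integral_diff[OF int(3,4)] integral_indicator_density_lborel nonneg prob)
  also have "\<dots> \<le> (\<integral> z. k * (g0 z * indicator S z) - k * (g0 z * indicator T z) \<partial>lborel)"
  proof (rule integral_mono)
    show "integrable lborel (\<lambda>z. g1 z * indicator S z - g1 z * indicator T z)"
      using int by auto
    show "integrable lborel (\<lambda>z. k * (g0 z * indicator S z) - k * (g0 z * indicator T z))"
      using int by auto
  qed (use assms in \<open>auto simp: indicator_def\<close>)
  also have "\<dots> = k * (measure (density lborel g0) S - measure (density lborel g0) T)"
    by (simp add: Bochner_Integration.integral_diff int integral_indicator_density_lborel nonneg prob
        right_diff_distrib)
  also have "\<dots> \<le> 0"
    using assms by (simp add: mult_nonneg_nonpos)
  finally show ?thesis by simp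
qed

lemma normal_density_shift:
  "normal_density m \<sigma> x
    = normal_density m0 \<sigma> x * exp (x * (m - m0) / \<sigma>\<^sup>2 - (m\<^sup>2 - m0\<^sup>2) / (2 * \<sigma>\<^sup>2))"
proof (cases "\<sigma> = 0")
  case False
  then have "- (x - m)\<^sup>2 / (2 * \<sigma>\<^sup>2)
      = - (x - m0)\<^sup>2 / (2 * \<sigma>\<^sup>2) + (x * (m - m0) / \<sigma>\<^sup>2 - (m\<^sup>2 - m0\<^sup>2) / (2 * \<sigma>\<^sup>2))"
    by (simp add: field_simps power2_eq_square)
  then show ?thesis
    unfolding normal_density_def by (simp only: exp_add mult.assoc)
qed (simp add: normal_density_def)

lemma iso_normal_density_shift:
  fixes \<mu> \<mu>0 z :: "real ^ 'd"
  shows "iso_normal_density \<mu> \<sigma> z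
    = iso_normal_density \<mu>0 \<sigma> z * exp (z \<bullet> (\<mu> - \<mu>0) / \<sigma>\<^sup>2 - (\<mu> \<bullet> \<mu> - \<mu>0 \<bullet> \<mu>0) / (2 * \<sigma>\<^sup>2))"
proof -
  have "iso_normal_density \<mu> \<sigma> z = (\<Prod>i\<in>UNIV. normal_density (\<mu>0 $ i) \<sigma> (z $ i)
      * exp (z $ i * (\<mu> $ i - \<mu>0 $ i) / \<sigma>\<^sup>2 - ((\<mu> $ i)\<^sup>2 - (\<mu>0 $ i)\<^sup>2) / (2 * \<sigma>\<^sup>2)))"
    unfolding iso_normal_density_def by (intro prod.cong refl normal_density_shift)
  also have "\<dots> = iso_normal_density \<mu>0 \<sigma> z
      * exp (\<Sum>i\<in>UNIV. z $ i * (\<mu> $ i - \<mu>0 $ i) / \<sigma>\<^sup>2 - ((\<mu> $ i)\<^sup>2 - (\<mu>0 $ i)\<^sup>2) / (2 * \<sigma>\<^sup>2))"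
    by (simp add: prod.distrib exp_sum iso_normal_density_def)
  also have "(\<Sum>i\<in>UNIV. z $ i * (\<mu> $ i - \<mu>0 $ i) / \<sigma>\<^sup>2 - ((\<mu> $ i)\<^sup>2 - (\<mu>0 $ i)\<^sup>2) / (2 * \<sigma>\<^sup>2))
      = z \<bullet> (\<mu> - \<mu>0) / \<sigma>\<^sup>2 - (\<mu> \<bullet> \<mu> - \<mu>0 \<bullet> \<mu>0) / (2 * \<sigma>\<^sup>2)"
    by (simp add: inner_vec_def sum_subtractf sum_divide_distrib power2_eq_square diff_divide_distrib)
  finally show ?thesis .
qed

lemma measure_iso_normal_le_halfspace:
  fixes \<mu>0 e :: "real ^ 'd"
  assumes "\<sigma> > 0" "S \<in> sets borel" "\<delta> \<ge> 0"
    and "measure (iso_normal \<mu>0 \<sigma>) S \<le> measure (iso_normal \<mu>0 \<sigma>) {z. z \<bullet> e > \<tau>}"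
  shows "measure (iso_normal (\<mu>0 + \<delta> *\<^sub>R e) \<sigma>) S \<le> measure (iso_normal (\<mu>0 + \<delta> *\<^sub>R e) \<sigma>) {z. z \<bullet> e > \<tau>}"
proof -
  define \<mu> where "\<mu> = \<mu>0 + \<delta> *\<^sub>R e"
  define K where "K = (\<mu> \<bullet> \<mu> - \<mu>0 \<bullet> \<mu>0) / (2 * \<sigma>\<^sup>2)"
  define k where "k = exp (\<delta> * \<tau> / \<sigma>\<^sup>2 - K)"
  \<comment> \<open>The likelihood ratio is nondecreasing in \<open>z \<bullet> e\<close>.\<close>
  have ratio: "iso_normal_density \<mu> \<sigma> z = iso_normal_density \<mu>0 \<sigma> z * exp (\<delta> * (z \<bullet> e) / \<sigma>\<^sup>2 - K)" for z
    using iso_normal_density_shift[of \<mu> \<sigma> z \<mu>0] by (simp add: \<mu>_def K_def)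
  have k_le: "k \<le> exp (\<delta> * t / \<sigma>\<^sup>2 - K)" if "\<tau> \<le> t" for t
    using that assms by (simp add: k_def divide_right_mono mult_left_mono)
  have k_ge: "exp (\<delta> * t / \<sigma>\<^sup>2 - K) \<le> k" if "t \<le> \<tau>" for t
    using that assms by (simp add: k_def divide_right_mono mult_left_mono)
  have "measure (density lborel (iso_normal_density \<mu> \<sigma>)) S
      \<le> measure (density lborel (iso_normal_density \<mu> \<sigma>)) {z. z \<bullet> e > \<tau>}"
  proof (rule neyman_pearson_density_lborel[where k = k])
    show "prob_space (density lborel (iso_normal_density \<mu>0 \<sigma>))"
      "prob_space (density lborel (iso_normal_density \<mu> \<sigma>))"
      using prob_space_iso_normal[OF \<open>\<sigma> > 0\<close>] by (simp_all add: iso_normal_def)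
    fix z
    show "z \<in> {z. z \<bullet> e > \<tau>} \<Longrightarrow> k * iso_normal_density \<mu>0 \<sigma> z \<le> iso_normal_density \<mu> \<sigma> z"
      "z \<notin> {z. z \<bullet> e > \<tau>} \<Longrightarrow> iso_normal_density \<mu> \<sigma> z \<le> k * iso_normal_density \<mu>0 \<sigma> z"
      unfolding ratio using k_le[of "z \<bullet> e"] k_ge[of "z \<bullet> e"] iso_normal_density_nonneg[of \<mu>0 \<sigma> z]
      by (auto simp: mult.commute[of k] intro!: mult_left_mono)
  qed (use assms in \<open>auto simp: k_def iso_normal_density_nonneg iso_normal_def\<close>)
  then show ?thesis
    by (simp add: \<mu>_def iso_normal_def)
qed

lemma measure_iso_normal_shift_le:
  fixes \<mu>0 \<mu> :: "real ^ 'd"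
  assumes "\<sigma> > 0" "S \<in> sets borel"
    and "measure (iso_normal \<mu>0 \<sigma>) S \<le> normal_tail c"
  shows "measure (iso_normal \<mu> \<sigma>) S \<le> normal_tail (c - norm (\<mu> - \<mu>0) / \<sigma>)"
proof (cases "\<mu> = \<mu>0")
  case False
  define \<delta> where "\<delta> = norm (\<mu> - \<mu>0)"
  define e where "e = (1 / \<delta>) *\<^sub>R (\<mu> - \<mu>0)"
  define \<tau> where "\<tau> = \<mu>0 \<bullet> e + \<sigma> * c"
  have "\<delta> > 0"
    using False by (simp add: \<delta>_def)
  then have \<mu>: "\<mu> = \<mu>0 + \<delta> *\<^sub>R e" and "norm e = 1"
    by (simp_all add: e_def \<delta>_def)
  then have "\<mu> \<bullet> e = \<mu>0 \<bullet> e + \<delta>"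
    by (simp add: inner_add_left dot_square_norm)
  have "measure (iso_normal \<mu> \<sigma>) S \<le> measure (iso_normal \<mu> \<sigma>) {z. z \<bullet> e > \<tau>}"
    unfolding \<mu> using assms \<open>\<delta> > 0\<close> measure_iso_normal_halfspace[OF \<open>\<sigma> > 0\<close> \<open>norm e = 1\<close>, of \<mu>0 \<tau>]
    by (intro measure_iso_normal_le_halfspace) (auto simp: \<tau>_def)
  also have "\<dots> = normal_tail (c - norm (\<mu> - \<mu>0) / \<sigma>)"
    using measure_iso_normal_halfspace[OF \<open>\<sigma> > 0\<close> \<open>norm e = 1\<close>, of \<mu> \<tau>] \<open>\<sigma> > 0\<close> \<open>\<mu> \<bullet> e = \<mu>0 \<bullet> e + \<delta>\<close>
    by (simp add: \<tau>_def \<delta>_def diff_divide_distrib)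
  finally show ?thesis .
qed (use assms in simp)

lemma measure_iso_normal_shift_ge:
  fixes \<mu>0 \<mu> :: "real ^ 'd"
  assumes "\<sigma> > 0" and [measurable]: "S \<in> sets borel"
    and "normal_tail c \<le> measure (iso_normal \<mu>0 \<sigma>) S"
  shows "normal_tail (c + norm (\<mu> - \<mu>0) / \<sigma>) \<le> measure (iso_normal \<mu> \<sigma>) S"
proof -
  interpret P0: prob_space "iso_normal \<mu>0 \<sigma>"
    by (rule prob_space_iso_normal) fact
  interpret P: prob_space "iso_normal \<mu> \<sigma>"
    by (rule prob_space_iso_normal) fact
  have compl: "measure (iso_normal \<mu>0 \<sigma>) (UNIV - S) \<le> normal_tail (- c)"
    using P0.prob_compl[of S] assms by (simp add: normal_tail_minus)
  from measure_iso_normal_shift_le[OF \<open>\<sigma> > 0\<close> _ compl, of \<mu>]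
  have "measure (iso_normal \<mu> \<sigma>) (UNIV - S) \<le> normal_tail (- c - norm (\<mu> - \<mu>0) / \<sigma>)"
    by simp
  then show ?thesis
    using P.prob_compl[of S] normal_tail_minus[of "c + norm (\<mu> - \<mu>0) / \<sigma>"] by simp
qed

section \<open>Sensitivity and Poisson subsampling\<close>

lemma norm_diff_insert_le_l2_sens:
  fixes h :: "'a::finite set \<Rightarrow> real ^ 'd"
  assumes "a \<notin> y"
  shows "norm (h (insert a y) - h y) \<le> l2_sens h"
proof -
  have "{norm (h y - h y') | y y'. neighbor_pm y y'} \<subseteq> (\<lambda>(y, y'). norm (h y - h y')) ` UNIV"
    by auto
  then have "finite {norm (h y - h y') | y y'. neighbor_pm y y'}"
    by (rule finite_subset) simp
  moreover have "neighbor_pm y (insert a y)"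
    using assms by (auto simp: neighbor_pm_def)
  ultimately have "norm (h y - h (insert a y)) \<le> l2_sens h"
    unfolding l2_sens_def by (intro Max_ge) auto
  then show ?thesis
    by (simp add: norm_minus_commute)
qed

lemma norm_diff_Un_le_l2_sens:
  fixes h :: "'a::finite set \<Rightarrow> real ^ 'd"
  assumes "u \<inter> v = {}"
  shows "norm (h (u \<union> v) - h u) \<le> real (card v) * l2_sens h"
  using finite[of v] assms
proof (induction v rule: finite_induct)
  case (insert a v)
  then have "a \<notin> u \<union> v"
    by auto
  have "norm (h (u \<union> insert a v) - h u)
      \<le> norm (h (insert a (u \<union> v)) - h (u \<union> v)) + norm (h (u \<union> v) - h u)"
    using norm_triangle_ineq[of "h (insert a (u \<union> v)) - h (u \<union> v)" "h (u \<union> v) - h u"] by simp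
  also have "\<dots> \<le> l2_sens h + real (card v) * l2_sens h"
    using norm_diff_insert_le_l2_sens[OF \<open>a \<notin> u \<union> v\<close>, of h] insert by (intro add_mono) auto
  finally show ?case
    using insert by (simp add: algebra_simps)
qed simp

lemma sum_Binom: "(\<Sum>i\<le>n. Binom i n r) = 1"
  using binomial_ring[of r "1 - r" n] by (simp add: Binom_def)

lemma Binom_nonneg: "0 \<le> r \<Longrightarrow> r \<le> 1 \<Longrightarrow> 0 \<le> Binom i n r"
  by (simp add: Binom_def)

lemma poisson_sub_nonneg: "0 \<le> r \<Longrightarrow> r \<le> 1 \<Longrightarrow> 0 \<le> poisson_sub r A v"
  by (simp add: poisson_sub_def)

lemma sum_Pow_card:
  assumes "finite A"
  shows "(\<Sum>v\<in>Pow A. f (card v)) = (\<Sum>i\<le>card A. of_nat (card A choose i) * f i)"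
proof -
  have "(\<Sum>v\<in>Pow A. f (card v)) = (\<Sum>i\<le>card A. \<Sum>v\<in>{v \<in> Pow A. card v = i}. f (card v))"
    using assms by (intro sum.group[symmetric]) (auto intro: card_mono)
  also have "\<dots> = (\<Sum>i\<le>card A. of_nat (card A choose i) * f i)"
  proof (intro sum.cong refl)
    fix i
    have "{v \<in> Pow A. card v = i} = {v. v \<subseteq> A \<and> card v = i}"
      by auto
    then show "(\<Sum>v\<in>{v \<in> Pow A. card v = i}. f (card v)) = of_nat (card A choose i) * f i"
      using n_subsets[OF assms, of i] by simp
  qed
  finally show ?thesis .
qed

lemma sum_poisson_sub_card:
  fixes f :: "nat \<Rightarrow> real"
  assumes "finite A"
  shows "(\<Sum>v\<in>Pow A. poisson_sub r A v * f (card v)) = (\<Sum>i\<le>card A. Binom i (card A) r * f i)"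
proof -
  have "(\<Sum>v\<in>Pow A. poisson_sub r A v * f (card v))
      = (\<Sum>v\<in>Pow A. r ^ card v * (1 - r) ^ (card A - card v) * f (card v))"
    by (intro sum.cong) (auto simp: poisson_sub_def)
  also have "\<dots> = (\<Sum>i\<le>card A. Binom i (card A) r * f i)"
    using sum_Pow_card[OF assms, of "\<lambda>i. r ^ i * (1 - r) ^ (card A - i) * f i"]
    by (simp add: Binom_def mult.assoc)
  finally show ?thesis .
qed

lemma sum_poisson_sub: "finite A \<Longrightarrow> (\<Sum>v\<in>Pow A. poisson_sub r A v) = 1"
  using sum_poisson_sub_card[of A r "\<lambda>_. 1"] by (simp add: sum_Binom)

lemma sum_Pow_Un_disjoint:
  assumes "finite c" "finite g" "c \<inter> g = {}"
  shows "(\<Sum>y\<in>Pow (c \<union> g). f y) = (\<Sum>u\<in>Pow c. \<Sum>v\<in>Pow g. f (u \<union> v))"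
proof -
  have "(\<Sum>u\<in>Pow c. \<Sum>v\<in>Pow g. f (u \<union> v)) = (\<Sum>(u, v)\<in>Pow c \<times> Pow g. f (u \<union> v))"
    by (rule sum.cartesian_product)
  also have "\<dots> = (\<Sum>y\<in>Pow (c \<union> g). f y)"
    by (rule sum.reindex_bij_witness[where j = "\<lambda>(u, v). u \<union> v" and i = "\<lambda>y. (y \<inter> c, y \<inter> g)"])
      (use assms in auto)
  finally show ?thesis by simp
qed

lemma poisson_sub_Un_disjoint:
  assumes "finite c" "finite g" "c \<inter> g = {}" "u \<subseteq> c" "v \<subseteq> g"
  shows "poisson_sub r (c \<union> g) (u \<union> v) = poisson_sub r c u * poisson_sub r g v"
proof -
  have "finite u" "finite v"
    using assms by (auto intro: finite_subset)
  then have "card (u \<union> v) = card u + card v" "card (c \<union> g) = card c + card g"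
    using assms by (auto intro: card_Un_disjoint)
  moreover have "card c + card g - (card u + card v) = (card c - card u) + (card g - card v)"
    using assms by (simp add: card_mono)
  ultimately show ?thesis
    using assms by (auto simp: poisson_sub_def power_add)
qed

section \<open>Mixtures and the hockey-stick divergence\<close>

lemma convex_sum_pos:
  fixes g w :: "'i \<Rightarrow> real"
  assumes "finite I" "\<And>i. i \<in> I \<Longrightarrow> 0 \<le> w i" "(\<Sum>i\<in>I. w i) = 1" "\<And>i. i \<in> I \<Longrightarrow> 0 < g i"
  shows "0 < (\<Sum>i\<in>I. g i * w i)"
proof -
  have "\<exists>i\<in>I. w i > 0"
  proof (rule ccontr)
    assume "\<not> (\<exists>i\<in>I. w i > 0)"
    then have "(\<Sum>i\<in>I. w i) = 0"
      using assms(2) by (intro sum.neutral) force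
    then show False
      using assms(3) by simp
  qed
  then obtain i where "i \<in> I" "w i > 0"
    by blast
  then have "0 < g i * w i"
    using assms(4) by simp
  also have "\<dots> \<le> (\<Sum>i\<in>I. g i * w i)"
    using \<open>i \<in> I\<close> assms by (intro member_le_sum) (auto intro: mult_nonneg_nonneg less_imp_le)
  finally show ?thesis .
qed

lemma integrable_mixture_lborel:
  fixes g :: "'i \<Rightarrow> 'a::euclidean_space \<Rightarrow> real"
  assumes "finite I" "\<And>i. i \<in> I \<Longrightarrow> g i \<in> borel_measurable borel"
    "\<And>i z. i \<in> I \<Longrightarrow> 0 \<le> g i z" "\<And>i. i \<in> I \<Longrightarrow> prob_space (density lborel (g i))"
  shows "integrable lborel (\<lambda>z. \<Sum>i\<in>I. g i z * w i)"
  using assms by (intro Bochner_Integration.integrable_sum integrable_mult_left integrable_density_lborel) auto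

lemma integral_indicator_mixture_lborel:
  fixes g :: "'i \<Rightarrow> 'a::euclidean_space \<Rightarrow> real"
  assumes "finite I" "\<And>i. i \<in> I \<Longrightarrow> g i \<in> borel_measurable borel"
    "\<And>i z. i \<in> I \<Longrightarrow> 0 \<le> g i z" "\<And>i. i \<in> I \<Longrightarrow> prob_space (density lborel (g i))"
    and [measurable]: "A \<in> sets borel"
  shows "(\<integral> z. (\<Sum>i\<in>I. g i z * w i) * indicator A z \<partial>lborel)
    = (\<Sum>i\<in>I. w i * measure (density lborel (g i)) A)"
proof -
  have "(\<integral> z. (\<Sum>i\<in>I. g i z * w i) * indicator A z \<partial>lborel)
      = (\<integral> z. (\<Sum>i\<in>I. g i z * indicator A z * w i) \<partial>lborel)"
    by (intro Bochner_Integration.integral_cong refl) (simp add: sum_distrib_left sum_distrib_right mult_ac)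
  also have "\<dots> = (\<Sum>i\<in>I. (\<integral> z. g i z * indicator A z \<partial>lborel) * w i)"
    using assms by (subst Bochner_Integration.integral_sum)
      (auto intro!: integrable_mult_left integrable_real_mult_indicator integrable_density_lborel)
  also have "\<dots> = (\<Sum>i\<in>I. w i * measure (density lborel (g i)) A)"
  proof (intro sum.cong refl)
    fix i assume "i \<in> I"
    then have "(\<integral> z. g i z * indicator A z \<partial>lborel) = measure (density lborel (g i)) A"
      using assms by (intro integral_indicator_density_lborel) auto
    then show "(\<integral> z. g i z * indicator A z \<partial>lborel) * w i = w i * measure (density lborel (g i)) A"
      by simp
  qed
  finally show ?thesis .
qed

lemma hockey_stick_eq_integral:
  fixes p q :: "'a::euclidean_space \<Rightarrow> real"
  assumes [measurable]: "p \<in> borel_measurable borel" "q \<in> borel_measurable borel"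
    and "integrable lborel p" "integrable lborel q"
  shows "hockey_stick lborel \<alpha> p q = ennreal (\<integral> z. max (p z - \<alpha> * q z) 0 \<partial>lborel)"
  unfolding hockey_stick_def using assms
  by (intro nn_integral_eq_integral) (auto intro!: integrable_max integrable_diff integrable_mult_right)

lemma integral_max_ge_set_integral:
  fixes p q :: "'a::euclidean_space \<Rightarrow> real"
  assumes "integrable lborel p" "integrable lborel q" "A \<in> sets borel"
  shows "(\<integral> z. p z * indicator A z \<partial>lborel) - \<alpha> * (\<integral> z. q z * indicator A z \<partial>lborel)
    \<le> (\<integral> z. max (p z - \<alpha> * q z) 0 \<partial>lborel)"
proof -
  have int: "integrable lborel (\<lambda>z. p z * indicator A z)" "integrable lborel (\<lambda>z. \<alpha> * (q z * indicator A z))"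
    using assms by (auto intro: integrable_real_mult_indicator)
  have "(\<integral> z. p z * indicator A z \<partial>lborel) - \<alpha> * (\<integral> z. q z * indicator A z \<partial>lborel)
      = (\<integral> z. p z * indicator A z - \<alpha> * (q z * indicator A z) \<partial>lborel)"
    using Bochner_Integration.integral_diff[OF int] by simp
  also have "\<dots> \<le> (\<integral> z. max (p z - \<alpha> * q z) 0 \<partial>lborel)"
    using assms int by (intro integral_mono) (auto simp: indicator_def)
  finally show ?thesis .
qed

lemma hockey_stick_eq_set_integral:
  fixes p q :: "'a::euclidean_space \<Rightarrow> real" and \<alpha> :: real
  assumes [measurable]: "p \<in> borel_measurable borel" "q \<in> borel_measurable borel"
    and "integrable lborel p" "integrable lborel q"
  defines "S \<equiv> {z. \<alpha> * q z < p z}"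
  shows "hockey_stick lborel \<alpha> p q
    = ennreal ((\<integral> z. p z * indicator S z \<partial>lborel) - \<alpha> * (\<integral> z. q z * indicator S z \<partial>lborel))"
proof -
  have [measurable]: "S \<in> sets borel"
    unfolding S_def by measurable
  have int: "integrable lborel (\<lambda>z. p z * indicator S z)" "integrable lborel (\<lambda>z. \<alpha> * (q z * indicator S z))"
    using assms by (auto intro: integrable_real_mult_indicator)
  have "(\<integral> z. max (p z - \<alpha> * q z) 0 \<partial>lborel)
      = (\<integral> z. p z * indicator S z - \<alpha> * (q z * indicator S z) \<partial>lborel)"
    by (intro Bochner_Integration.integral_cong) (auto simp: S_def indicator_def)
  then show ?thesis
    using hockey_stick_eq_integral[OF assms(1-4)] Bochner_Integration.integral_diff[OF int] by simp
qed

section \<open>The one-dimensional dominating pair\<close>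

definition binom_normal_mixture :: "real \<Rightarrow> real \<Rightarrow> nat \<Rightarrow> real \<Rightarrow> real \<Rightarrow> real" where
  "binom_normal_mixture d s K r t = (\<Sum>i\<le>K. normal_density (d * real i) s t * Binom i K r)"

lemma borel_measurable_binom_normal_mixture [measurable]:
  "binom_normal_mixture d s K r \<in> borel_measurable borel"
  unfolding binom_normal_mixture_def[abs_def] by measurable

lemma binom_normal_mixture_nonneg: "0 \<le> r \<Longrightarrow> r \<le> 1 \<Longrightarrow> 0 \<le> binom_normal_mixture d s K r t"
  unfolding binom_normal_mixture_def by (intro sum_nonneg mult_nonneg_nonneg Binom_nonneg) auto

lemma binom_normal_mixture_pos:
  "0 \<le> r \<Longrightarrow> r \<le> 1 \<Longrightarrow> s > 0 \<Longrightarrow> 0 < binom_normal_mixture d s K r t"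
  unfolding binom_normal_mixture_def
  by (intro convex_sum_pos) (auto simp: sum_Binom Binom_nonneg normal_density_pos)

lemma integrable_binom_normal_mixture:
  "s > 0 \<Longrightarrow> integrable lborel (binom_normal_mixture d s K r)"
  unfolding binom_normal_mixture_def[abs_def]
  by (intro integrable_mixture_lborel) (auto intro: prob_space_normal_density)

lemma integral_indicator_binom_normal_mixture:
  assumes "s > 0" "A \<in> sets borel"
  shows "(\<integral> t. binom_normal_mixture d s K r t * indicator A t \<partial>lborel)
    = (\<Sum>i\<le>K. Binom i K r * measure (density lborel (normal_density (d * real i) s)) A)"
  unfolding binom_normal_mixture_def
  by (intro integral_indicator_mixture_lborel) (auto intro: prob_space_normal_density assms)

lemma integral_binom_normal_mixture:
  assumes "s > 0"
  shows "(\<integral> t. binom_normal_mixture d s K r t \<partial>lborel) = 1"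
proof -
  have "measure (density lborel (normal_density m s)) UNIV = 1" for m
    using prob_space.prob_space[OF prob_space_normal_density[OF assms, of m]] by simp
  then show ?thesis
    using integral_indicator_binom_normal_mixture[OF assms, of UNIV d K r] by (simp add: sum_Binom)
qed

lemma integral_indicator_binom_normal_mixture_greaterThan:
  assumes "s > 0"
  shows "(\<integral> t. binom_normal_mixture d s K r t * indicator {c * s<..} t \<partial>lborel)
    = (\<Sum>i\<le>K. Binom i K r * normal_tail (c - d * real i / s))"
  using assms
  by (simp add: integral_indicator_binom_normal_mixture measure_normal_density_greaterThan diff_divide_distrib)

lemma sum_shift_eq_binom_normal_mixture:
  "(\<Sum>i=1..K+1. normal_density (d * real (i - 1)) s t * Binom (i - 1) K r) = binom_normal_mixture d s K r t"
  unfolding binom_normal_mixture_def atLeast0AtMost[symmetric]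
  using sum.shift_bounds_cl_Suc_ivl[of "\<lambda>i. normal_density (d * real (i - 1)) s t * Binom (i - 1) K r" 0 K]
  by simp

lemma integral_max_binom_normal_mixture_ge:
  fixes \<alpha> :: real and Km Kp :: nat
  assumes "0 \<le> r" "r \<le> 1" "s > 0"
  defines "H \<equiv> (\<integral> t. max (binom_normal_mixture 1 s Km r t - \<alpha> * binom_normal_mixture (-1) s Kp r t) 0 \<partial>lborel)"
  shows "1 - \<alpha> \<le> H"
    and "(\<Sum>i\<le>Km. Binom i Km r * normal_tail (c - real i / s))
          - \<alpha> * (\<Sum>i\<le>Kp. Binom i Kp r * normal_tail (c + real i / s)) \<le> H"
proof -
  have int: "integrable lborel (binom_normal_mixture 1 s Km r)"
    "integrable lborel (binom_normal_mixture (-1) s Kp r)"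
    using assms(3) by (simp_all add: integrable_binom_normal_mixture)
  show "1 - \<alpha> \<le> H"
    using integral_max_ge_set_integral[OF int, of UNIV \<alpha>]
    by (simp add: H_def integral_binom_normal_mixture[OF assms(3)])
  show "(\<Sum>i\<le>Km. Binom i Km r * normal_tail (c - real i / s))
          - \<alpha> * (\<Sum>i\<le>Kp. Binom i Kp r * normal_tail (c + real i / s)) \<le> H"
    using integral_max_ge_set_integral[OF int, of "{c * s<..}" \<alpha>]
    by (simp add: H_def integral_indicator_binom_normal_mixture_greaterThan[OF assms(3)])
qed

section \<open>The hockey-stick bound\<close>

lemma sum_poisson_measure_iso_normal_le:
  fixes h :: "'a::finite set \<Rightarrow> real ^ 'd"
  assumes "0 \<le> r" "r \<le> 1" "\<sigma> > 0" "S \<in> sets borel" "u \<inter> g = {}"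
    and "measure (iso_normal (h u) \<sigma>) S \<le> normal_tail c"
  shows "(\<Sum>v\<in>Pow g. poisson_sub r g v * measure (iso_normal (h (u \<union> v)) \<sigma>) S)
    \<le> (\<Sum>i\<le>card g. Binom i (card g) r * normal_tail (c - real i * l2_sens h / \<sigma>))"
proof -
  have "measure (iso_normal (h (u \<union> v)) \<sigma>) S \<le> normal_tail (c - real (card v) * l2_sens h / \<sigma>)"
    if "v \<subseteq> g" for v
  proof -
    have "measure (iso_normal (h (u \<union> v)) \<sigma>) S \<le> normal_tail (c - norm (h (u \<union> v) - h u) / \<sigma>)"
      using assms by (intro measure_iso_normal_shift_le) auto
    also have "\<dots> \<le> normal_tail (c - real (card v) * l2_sens h / \<sigma>)"
      using norm_diff_Un_le_l2_sens[of u v h] that assms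
      by (intro normal_tail_antimono diff_left_mono divide_right_mono) auto
    finally show ?thesis .
  qed
  then have "(\<Sum>v\<in>Pow g. poisson_sub r g v * measure (iso_normal (h (u \<union> v)) \<sigma>) S)
      \<le> (\<Sum>v\<in>Pow g. poisson_sub r g v * normal_tail (c - real (card v) * l2_sens h / \<sigma>))"
    using assms by (intro sum_mono mult_left_mono poisson_sub_nonneg) auto
  also have "\<dots> = (\<Sum>i\<le>card g. Binom i (card g) r * normal_tail (c - real i * l2_sens h / \<sigma>))"
    by (rule sum_poisson_sub_card) simp
  finally show ?thesis .
qed

lemma sum_poisson_measure_iso_normal_ge:
  fixes h :: "'a::finite set \<Rightarrow> real ^ 'd"
  assumes "0 \<le> r" "r \<le> 1" "\<sigma> > 0" "S \<in> sets borel" "u \<inter> g = {}"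
    and "normal_tail c \<le> measure (iso_normal (h u) \<sigma>) S"
  shows "(\<Sum>i\<le>card g. Binom i (card g) r * normal_tail (c + real i * l2_sens h / \<sigma>))
    \<le> (\<Sum>v\<in>Pow g. poisson_sub r g v * measure (iso_normal (h (u \<union> v)) \<sigma>) S)"
proof -
  have "normal_tail (c + real (card v) * l2_sens h / \<sigma>) \<le> measure (iso_normal (h (u \<union> v)) \<sigma>) S"
    if "v \<subseteq> g" for v
  proof -
    have "normal_tail (c + real (card v) * l2_sens h / \<sigma>) \<le> normal_tail (c + norm (h (u \<union> v) - h u) / \<sigma>)"
      using norm_diff_Un_le_l2_sens[of u v h] that assms
      by (intro normal_tail_antimono add_left_mono divide_right_mono) auto
    also have "\<dots> \<le> measure (iso_normal (h (u \<union> v)) \<sigma>) S"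
      using assms by (intro measure_iso_normal_shift_ge) auto
    finally show ?thesis .
  qed
  then have "(\<Sum>v\<in>Pow g. poisson_sub r g v * normal_tail (c + real (card v) * l2_sens h / \<sigma>))
      \<le> (\<Sum>v\<in>Pow g. poisson_sub r g v * measure (iso_normal (h (u \<union> v)) \<sigma>) S)"
    using assms by (intro sum_mono mult_left_mono poisson_sub_nonneg) auto
  then show ?thesis
    by (subst (asm) sum_poisson_sub_card) simp_all
qed

lemma conditional_hockey_stick_le:
  fixes h :: "'a::finite set \<Rightarrow> real ^ 'd"
  assumes "0 \<le> r" "r \<le> 1" "\<sigma> > 0" "l2_sens h > 0" "\<alpha> \<ge> 0" "S \<in> sets borel"
    and "u \<inter> gm = {}" "u \<inter> gp = {}"
  defines "m \<equiv> \<lambda>y. measure (iso_normal (h y) \<sigma>) S" and "s \<equiv> \<sigma> / l2_sens h"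
  shows "(\<Sum>v\<in>Pow gm. poisson_sub r gm v * m (u \<union> v)) - \<alpha> * (\<Sum>v\<in>Pow gp. poisson_sub r gp v * m (u \<union> v))
    \<le> (\<integral> t. max (binom_normal_mixture 1 s (card gm) r t - \<alpha> * binom_normal_mixture (-1) s (card gp) r t) 0 \<partial>lborel)"
    (is "?A - \<alpha> * ?B \<le> ?H")
proof -
  have "s > 0"
    using assms by (simp add: s_def)
  have m: "0 \<le> m y" "m y \<le> 1" for y
    using prob_space.prob_le_1[OF prob_space_iso_normal[OF \<open>\<sigma> > 0\<close>]] by (auto simp: m_def)
  have "0 \<le> ?B"
    using assms m by (intro sum_nonneg mult_nonneg_nonneg poisson_sub_nonneg)
  \<comment> \<open>\<open>normal_tail\<close> takes every value in \<open>(0, 1)\<close>; masses 0 and 1 are shared by all the Gaussians.\<close>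
  consider "m u = 0" | "m u = 1" | "0 < m u" "m u < 1"
    using m[of u] by fastforce
  then show ?thesis
  proof cases
    case 1
    then have "m (u \<union> v) = 0" for v
      using assms by (simp add: m_def measure_iso_normal_eq_0_iff)
    then show ?thesis
      using \<open>0 \<le> ?B\<close> \<open>\<alpha> \<ge> 0\<close> by (simp add: integral_nonneg_AE)
  next
    case 2
    then have "m (u \<union> v) = 1" for v
      using assms by (simp add: m_def measure_iso_normal_eq_1_iff)
    then show ?thesis
      using integral_max_binom_normal_mixture_ge(1)[OF assms(1,2) \<open>s > 0\<close>] by (simp add: sum_poisson_sub)
  next
    case 3
    then obtain c where c: "normal_tail c = m u"
      by (rule normal_tail_surj)
    have s: "real i / s = real i * l2_sens h / \<sigma>" for i
      using assms by (simp add: s_def)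
    have "?A \<le> (\<Sum>i\<le>card gm. Binom i (card gm) r * normal_tail (c - real i / s))"
      using sum_poisson_measure_iso_normal_le[OF assms(1-3,6,7), where c = c] c by (simp add: m_def s)
    moreover have "(\<Sum>i\<le>card gp. Binom i (card gp) r * normal_tail (c + real i / s)) \<le> ?B"
      using sum_poisson_measure_iso_normal_ge[OF assms(1-3,6,8), where c = c] c by (simp add: m_def s)
    ultimately have "?A - \<alpha> * ?B \<le> (\<Sum>i\<le>card gm. Binom i (card gm) r * normal_tail (c - real i / s))
        - \<alpha> * (\<Sum>i\<le>card gp. Binom i (card gp) r * normal_tail (c + real i / s))"
      using \<open>\<alpha> \<ge> 0\<close> by (smt (verit) mult_left_mono)
    also have "\<dots> \<le> ?H"
      by (rule integral_max_binom_normal_mixture_ge(2)[OF assms(1,2) \<open>s > 0\<close>])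
    finally show ?thesis .
  qed
qed

lemma subsampled_density_eq:
  "subsampled_density r \<sigma> h x z = (\<Sum>y\<in>Pow x. iso_normal_density (h y) \<sigma> z * poisson_sub r x y)"
  by (simp add: subsampled_density_def gauss_mech_density_eq)

lemma borel_measurable_subsampled_density [measurable]:
  fixes h :: "'a::finite set \<Rightarrow> real ^ 'd"
  shows "subsampled_density r \<sigma> h x \<in> borel_measurable borel"
  unfolding subsampled_density_eq[abs_def] by measurable

lemma subsampled_density_nonneg: "0 \<le> r \<Longrightarrow> r \<le> 1 \<Longrightarrow> 0 \<le> subsampled_density r \<sigma> h x z"
  unfolding subsampled_density_eq
  by (intro sum_nonneg mult_nonneg_nonneg iso_normal_density_nonneg poisson_sub_nonneg)

lemma subsampled_density_pos:
  fixes h :: "'a::finite set \<Rightarrow> real ^ 'd"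
  shows "0 \<le> r \<Longrightarrow> r \<le> 1 \<Longrightarrow> \<sigma> > 0 \<Longrightarrow> 0 < subsampled_density r \<sigma> h x z"
  unfolding subsampled_density_eq
  by (intro convex_sum_pos) (auto simp: poisson_sub_nonneg sum_poisson_sub iso_normal_density_pos)

lemma integrable_subsampled_density:
  fixes h :: "'a::finite set \<Rightarrow> real ^ 'd"
  shows "\<sigma> > 0 \<Longrightarrow> integrable lborel (subsampled_density r \<sigma> h x)"
  unfolding subsampled_density_eq[abs_def]
  by (intro integrable_mixture_lborel)
    (auto simp: iso_normal_density_nonneg prob_space_iso_normal[unfolded iso_normal_def])

lemma integral_indicator_subsampled_density:
  fixes h :: "'a::finite set \<Rightarrow> real ^ 'd"
  assumes "\<sigma> > 0" "S \<in> sets borel" "c \<inter> g = {}"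
  shows "(\<integral> z. subsampled_density r \<sigma> h (c \<union> g) z * indicator S z \<partial>lborel)
    = (\<Sum>u\<in>Pow c. poisson_sub r c u
        * (\<Sum>v\<in>Pow g. poisson_sub r g v * measure (iso_normal (h (u \<union> v)) \<sigma>) S))"
proof -
  have "(\<integral> z. subsampled_density r \<sigma> h (c \<union> g) z * indicator S z \<partial>lborel)
      = (\<Sum>y\<in>Pow (c \<union> g). poisson_sub r (c \<union> g) y * measure (iso_normal (h y) \<sigma>) S)"
    unfolding subsampled_density_eq iso_normal_def using assms
    by (intro integral_indicator_mixture_lborel)
      (auto simp: iso_normal_density_nonneg prob_space_iso_normal[unfolded iso_normal_def])
  also have "\<dots> = (\<Sum>u\<in>Pow c. \<Sum>v\<in>Pow g. poisson_sub r c u * poisson_sub r g v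
      * measure (iso_normal (h (u \<union> v)) \<sigma>) S)"
    using assms by (auto simp: sum_Pow_Un_disjoint poisson_sub_Un_disjoint intro!: sum.cong)
  finally show ?thesis
    by (simp add: sum_distrib_left mult.assoc)
qed

lemma hockey_stick_subsampled_density_le:
  fixes h :: "'a::finite set \<Rightarrow> real ^ 'd"
  assumes "0 \<le> r" "r \<le> 1" "\<sigma> > 0" "l2_sens h > 0" "\<alpha> \<ge> 0" "c \<inter> gm = {}" "c \<inter> gp = {}"
  defines "s \<equiv> \<sigma> / l2_sens h"
  shows "hockey_stick lborel \<alpha> (subsampled_density r \<sigma> h (c \<union> gm)) (subsampled_density r \<sigma> h (c \<union> gp))
    \<le> hockey_stick lborel \<alpha> (binom_normal_mixture 1 s (card gm) r) (binom_normal_mixture (-1) s (card gp) r)"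
proof -
  define p where "p = subsampled_density r \<sigma> h (c \<union> gm)"
  define q where "q = subsampled_density r \<sigma> h (c \<union> gp)"
  define S where "S = {z. \<alpha> * q z < p z}"
  have [measurable]: "S \<in> sets borel"
    by (simp add: S_def p_def q_def)
  define H where "H = (\<integral> t. max (binom_normal_mixture 1 s (card gm) r t
    - \<alpha> * binom_normal_mixture (-1) s (card gp) r t) 0 \<partial>lborel)"
  have "s > 0"
    using assms by (simp add: s_def)
  have "(\<integral> z. p z * indicator S z \<partial>lborel) - \<alpha> * (\<integral> z. q z * indicator S z \<partial>lborel)
      = (\<Sum>u\<in>Pow c. poisson_sub r c u * ((\<Sum>v\<in>Pow gm. poisson_sub r gm v * measure (iso_normal (h (u \<union> v)) \<sigma>) S)
          - \<alpha> * (\<Sum>v\<in>Pow gp. poisson_sub r gp v * measure (iso_normal (h (u \<union> v)) \<sigma>) S)))"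
    using assms by (simp add: p_def q_def integral_indicator_subsampled_density
        sum_distrib_left sum_subtractf right_diff_distrib mult.left_commute)
  also have "\<dots> \<le> (\<Sum>u\<in>Pow c. poisson_sub r c u * H)"
    using assms unfolding H_def s_def
    by (intro sum_mono mult_left_mono poisson_sub_nonneg conditional_hockey_stick_le) auto
  also have "\<dots> = H"
    by (simp add: sum_poisson_sub flip: sum_distrib_right)
  finally have "hockey_stick lborel \<alpha> p q \<le> ennreal H"
    using assms by (simp add: p_def q_def S_def hockey_stick_eq_set_integral integrable_subsampled_density
        ennreal_leI)
  also have "ennreal H = hockey_stick lborel \<alpha> (binom_normal_mixture 1 s (card gm) r)
      (binom_normal_mixture (-1) s (card gp) r)"
    using \<open>s > 0\<close> by (simp add: H_def hockey_stick_eq_integral integrable_binom_normal_mixture)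
  finally show ?thesis
    by (simp add: p_def q_def)
qed

section \<open>Renyi moments as mixtures of hockey-stick divergences\<close>

lemma has_integral_renyi_kernel:
  fixes a b \<alpha> :: real
  assumes "a \<ge> 0" "b > 0" "\<alpha> > 1"
  shows "((\<lambda>\<gamma>. \<alpha> * (\<alpha> - 1) * \<gamma> powr (\<alpha> - 2) * (a - \<gamma> * b)) has_integral a powr \<alpha> * b powr (1 - \<alpha>))
    {0..a / b}"
proof -
  define F where "F = (\<lambda>\<gamma>::real. \<alpha> * a * \<gamma> powr (\<alpha> - 1) - (\<alpha> - 1) * b * \<gamma> powr \<alpha>)"
  have "F 0 = 0"
    using assms by (simp add: F_def)
  moreover have "F (a / b) = a powr \<alpha> * b powr (1 - \<alpha>)"
  proof (cases "a = 0")
    case False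
    then have "a > 0"
      using assms by simp
    have "F (a / b) = a * (a / b) powr (\<alpha> - 1)"
      using \<open>a > 0\<close> assms powr_add[of "a / b" 1 "\<alpha> - 1"] by (simp add: F_def algebra_simps)
    also have "\<dots> = a powr \<alpha> * b powr (1 - \<alpha>)"
      using \<open>a > 0\<close> assms powr_add[of a 1 "\<alpha> - 1"] powr_add[of b "1 - \<alpha>" "\<alpha> - 1"]
      by (simp add: powr_divide divide_simps)
    finally show ?thesis .
  qed (use assms in \<open>simp add: F_def\<close>)
  moreover have "((\<lambda>\<gamma>. \<alpha> * (\<alpha> - 1) * \<gamma> powr (\<alpha> - 2) * (a - \<gamma> * b)) has_integral F (a / b) - F 0) {0..a / b}"
  proof (rule fundamental_theorem_of_calculus_interior)
    show "continuous_on {0..a / b} F"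
      unfolding F_def using assms by (intro continuous_intros continuous_on_powr') auto
    fix \<gamma> assume "\<gamma> \<in> {0<..<a / b}"
    then have "\<gamma> > 0" by simp
    have "(F has_real_derivative \<alpha> * a * ((\<alpha> - 1) * \<gamma> powr (\<alpha> - 1 - 1)) - (\<alpha> - 1) * b * (\<alpha> * \<gamma> powr (\<alpha> - 1))) (at \<gamma>)"
      unfolding F_def by (intro DERIV_diff DERIV_cmult has_real_derivative_powr \<open>\<gamma> > 0\<close>)
    moreover have "\<gamma> powr (\<alpha> - 1) = \<gamma> powr (\<alpha> - 2) * \<gamma>"
      using \<open>\<gamma> > 0\<close> powr_add[of \<gamma> "\<alpha> - 2" 1] by simp
    ultimately show "(F has_vector_derivative \<alpha> * (\<alpha> - 1) * \<gamma> powr (\<alpha> - 2) * (a - \<gamma> * b)) (at \<gamma>)"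
      by (simp add: has_real_derivative_iff_has_vector_derivative algebra_simps)
  qed (use assms in simp)
  ultimately show ?thesis
    by simp
qed

lemma nn_integral_renyi_kernel:
  fixes a b \<alpha> :: real
  assumes "a \<ge> 0" "b > 0" "\<alpha> > 1"
  shows "(\<integral>\<^sup>+ \<gamma>. ennreal (\<alpha> * (\<alpha> - 1) * \<gamma> powr (\<alpha> - 2) * max (a - \<gamma> * b) 0) * indicator {0..} \<gamma> \<partial>lborel)
    = ennreal (a powr \<alpha> * b powr (1 - \<alpha>))"
proof -
  have "ennreal (\<alpha> * (\<alpha> - 1) * \<gamma> powr (\<alpha> - 2) * max (a - \<gamma> * b) 0) * indicator {0..} \<gamma>
      = ennreal (\<alpha> * (\<alpha> - 1) * \<gamma> powr (\<alpha> - 2) * (a - \<gamma> * b)) * indicator {0..a / b} \<gamma>" for \<gamma>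
    using assms by (auto simp: indicator_def field_simps)
  moreover have "0 \<le> \<alpha> * (\<alpha> - 1) * \<gamma> powr (\<alpha> - 2) * (a - \<gamma> * b)" if "\<gamma> \<in> {0..a / b}" for \<gamma>
    using that assms by (intro mult_nonneg_nonneg) (auto simp: field_simps)
  ultimately show ?thesis
    using nn_integral_has_integral_lebesgue'[OF _ has_integral_renyi_kernel[OF assms]] by simp
qed

lemma renyi_moment_eq_integral_hockey_stick:
  fixes p q :: "'a::euclidean_space \<Rightarrow> real"
  assumes [measurable]: "p \<in> borel_measurable borel" "q \<in> borel_measurable borel"
    and "\<And>z. 0 \<le> p z" "\<And>z. 0 < q z" "\<alpha> > 1"
  shows "renyi_moment lborel \<alpha> p q
    = (\<integral>\<^sup>+ \<gamma>. ennreal (\<alpha> * (\<alpha> - 1) * \<gamma> powr (\<alpha> - 2)) * indicator {0..} \<gamma> * hockey_stick lborel \<gamma> p q \<partial>lborel)"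
proof -
  define K where "K = (\<lambda>(z :: 'a, \<gamma> :: real).
    ennreal (\<alpha> * (\<alpha> - 1) * \<gamma> powr (\<alpha> - 2) * max (p z - \<gamma> * q z) 0) * indicator {0..} \<gamma>)"
  have [measurable]: "K \<in> borel_measurable (lborel \<Otimes>\<^sub>M lborel)"
    unfolding K_def by measurable
  have "renyi_moment lborel \<alpha> p q = (\<integral>\<^sup>+ z. (\<integral>\<^sup>+ \<gamma>. K (z, \<gamma>) \<partial>lborel) \<partial>lborel)"
    unfolding renyi_moment_def K_def using assms by (simp add: nn_integral_renyi_kernel)
  also have "\<dots> = (\<integral>\<^sup>+ \<gamma>. (\<integral>\<^sup>+ z. K (z, \<gamma>) \<partial>lborel) \<partial>lborel)"
    by (rule pair_sigma_finite.Fubini[symmetric]) (auto simp: pair_sigma_finite_def lborel.sigma_finite_measure_axioms)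
  also have "\<dots> = (\<integral>\<^sup>+ \<gamma>. ennreal (\<alpha> * (\<alpha> - 1) * \<gamma> powr (\<alpha> - 2)) * indicator {0..} \<gamma> * hockey_stick lborel \<gamma> p q \<partial>lborel)"
    unfolding hockey_stick_def K_def using assms
    by (subst nn_integral_cmult[symmetric]) (auto intro!: nn_integral_cong simp: ennreal_mult' mult_ac)
  finally show ?thesis .
qed

lemma renyi_moment_le_if_hockey_stick_le:
  fixes p q :: "'a::euclidean_space \<Rightarrow> real" and P Q :: "'b::euclidean_space \<Rightarrow> real"
  assumes "p \<in> borel_measurable borel" "q \<in> borel_measurable borel"
    "P \<in> borel_measurable borel" "Q \<in> borel_measurable borel"
    and "\<And>z. 0 \<le> p z" "\<And>z. 0 < q z" "\<And>z. 0 \<le> P z" "\<And>z. 0 < Q z" "\<alpha> > 1"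
    and "\<And>\<gamma>. \<gamma> \<ge> 0 \<Longrightarrow> hockey_stick lborel \<gamma> p q \<le> hockey_stick lborel \<gamma> P Q"
  shows "renyi_moment lborel \<alpha> p q \<le> renyi_moment lborel \<alpha> P Q"
  using assms
  by (simp add: renyi_moment_eq_integral_hockey_stick indicator_def nn_integral_mono mult_left_mono)

theorem theorem3p8:
  fixes h :: "'a::finite set \<Rightarrow> real ^ 'd"
    and r \<sigma> \<alpha> :: real and Kp Km :: nat and x x' :: "'a set"
  assumes "0 \<le> r" "r \<le> 1" "\<sigma> > 0" "l2_sens h > 0"
    and "group_neighbor Kp Km x x'"
  shows "let p = subsampled_density r \<sigma> h x;
             q = subsampled_density r \<sigma> h x';
             P = (\<lambda>t::real. \<Sum>i=1..Km+1. normal_density (real (i - 1)) (\<sigma> / l2_sens h) t * Binom (i - 1) Km r);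
             Q = (\<lambda>t::real. \<Sum>j=1..Kp+1. normal_density (- real (j - 1)) (\<sigma> / l2_sens h) t * Binom (j - 1) Kp r)
         in (\<alpha> \<ge> 0 \<longrightarrow> hockey_stick lborel \<alpha> p q \<le> hockey_stick lborel \<alpha> P Q)
          \<and> (\<alpha> > 1 \<longrightarrow> renyi_moment lborel \<alpha> p q \<le> renyi_moment lborel \<alpha> P Q)"
proof -
  obtain gm gp where g: "gm \<subseteq> x" "card gm = Km" "gp \<inter> x = {}" "card gp = Kp" "x' = (x - gm) \<union> gp"
    using assms(5) unfolding group_neighbor_def by blast
  define c where "c = x - gm"
  have x: "x = c \<union> gm" "x' = c \<union> gp" "c \<inter> gm = {}" "c \<inter> gp = {}"
    using g by (auto simp: c_def)
  define s where "s = \<sigma> / l2_sens h"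
  have "s > 0"
    using assms by (simp add: s_def)
  have P: "(\<lambda>t. \<Sum>i=1..Km+1. normal_density (real (i - 1)) (\<sigma> / l2_sens h) t * Binom (i - 1) Km r)
      = binom_normal_mixture 1 s Km r"
    and Q: "(\<lambda>t. \<Sum>j=1..Kp+1. normal_density (- real (j - 1)) (\<sigma> / l2_sens h) t * Binom (j - 1) Kp r)
      = binom_normal_mixture (-1) s Kp r"
    using sum_shift_eq_binom_normal_mixture[of 1] sum_shift_eq_binom_normal_mixture[of "-1"]
    by (simp_all add: fun_eq_iff s_def)
  have hockey: "hockey_stick lborel \<gamma> (subsampled_density r \<sigma> h x) (subsampled_density r \<sigma> h x')
      \<le> hockey_stick lborel \<gamma> (binom_normal_mixture 1 s Km r) (binom_normal_mixture (-1) s Kp r)"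
    if "\<gamma> \<ge> 0" for \<gamma>
    using hockey_stick_subsampled_density_le[OF assms(1-4) that x(3,4)] by (simp add: x g s_def)
  then have "renyi_moment lborel \<alpha> (subsampled_density r \<sigma> h x) (subsampled_density r \<sigma> h x')
      \<le> renyi_moment lborel \<alpha> (binom_normal_mixture 1 s Km r) (binom_normal_mixture (-1) s Kp r)"
    if "\<alpha> > 1"
    using assms \<open>s > 0\<close> that
    by (intro renyi_moment_le_if_hockey_stick_le) (auto simp: subsampled_density_nonneg
        subsampled_density_pos binom_normal_mixture_nonneg binom_normal_mixture_pos)
  with hockey show ?thesis
    unfolding Let_def P Q by simp
qed

end
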